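(* Let $\alpha,\beta:\mathcal{X}\to\mathcal{Y}$ be two linear maps between vector spaces $\mathcal{X},\mathcal{Y}$ over $\mathbb{R}$. (1) If $\beta(\ker\alpha)\cap\mathrm{im}\,\alpha=\{0\}\subset\mathcal{Y}$, then a generic linear combination $\gamma$ of $\alpha$ and $\beta$ satisfies $\ker\gamma=\ker\alpha\cap\ker\beta$. (2) If $\beta^{\diamondsuit}(\ker\alpha^{\diamondsuit})\cap\mathrm{im}\,\alpha^{\diamondsuit}=\{0\}\subset\mathcal{X}^{\diamondsuit}$, or equivalently $\beta^{-1}(\mathrm{im}\,\alpha)+\ker\alpha=\mathcal{X}$, then a generic linear combination $\gamma$ of $\alpha$ and $\beta$ satisfies $\mathrm{im}\,\gamma=\mathrm{im}\,\alpha+\mathrm{im}\,\beta$.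
   Context: $(\cdot)^{\diamondsuit}$ denotes the dual vector space and dual (transpose) linear map. A generic linear combination of $\alpha$ and $\beta$ means $a\alpha+b\beta$ for $(a,b)$ in an open dense subset of $\mathbb{R}^2$. *)

theory Defs
  imports "HOL-Analysis.Analysis"
begin

text \<open>A property P of pairs (a,b) holds for a generic linear combination a*alpha + b*beta
  if it holds for all (a,b) in some open dense subset of R^2.\<close>
definition generic_comb :: "(real \<Rightarrow> real \<Rightarrow> bool) \<Rightarrow> bool" where
  "generic_comb P \<longleftrightarrow> (\<exists>U :: (real \<times> real) set. open U \<and> closure U = UNIV \<and>
      (\<forall>p\<in>U. P (fst p) (snd p)))"

definition ker :: "('a \<Rightarrow> 'b::zero) \<Rightarrow> 'a set" where
  "ker f = {x. f x = 0}"

definition dual_space :: "('a::real_vector \<Rightarrow> real) set" where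
  "dual_space = {\<phi>. linear \<phi>}"

definition dual_map :: "('a::real_vector \<Rightarrow> 'b::real_vector) \<Rightarrow> ('b \<Rightarrow> real) \<Rightarrow> ('a \<Rightarrow> real)" where
  "dual_map f \<phi> = \<phi> \<circ> f"

definition dual_ker :: "('a::real_vector \<Rightarrow> 'b::real_vector) \<Rightarrow> ('b \<Rightarrow> real) set" where
  "dual_ker f = {\<phi> \<in> dual_space. dual_map f \<phi> = (\<lambda>_. 0)}"

definition dual_im :: "('a::real_vector \<Rightarrow> 'b::real_vector) \<Rightarrow> ('a \<Rightarrow> real) set" where
  "dual_im f = dual_map f ` dual_space"

end

theory Submission
  imports Defs
begin

text \<open>
  For b \<noteq> 0, a vector x in the kernel of a \<alpha> + b \<beta> outside ker \<alpha> \<inter> ker \<beta> is an eigenvector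
  of the pencil (\<alpha>, \<beta>): \<beta> x = \<mu> \<alpha> x with \<mu> = -a/b. When \<beta>(ker \<alpha>) \<inter> im \<alpha> = 0, eigenvectors
  for distinct eigenvalues are linearly independent modulo ker \<alpha> \<inter> ker \<beta>, so there are only
  finitely many eigenvalues, and the exceptional pairs (a, b) lie on finitely many lines
  through the origin. Part (2) is part (1) for the adjoints \<alpha>', \<beta>': via the inner product the
  dual condition reads \<beta>'(ker \<alpha>') \<inter> im \<alpha>' = 0, which says that the orthogonal complement of
  the preimage of im \<alpha> under \<beta>, plus ker \<alpha>, is zero; and im \<gamma> is the orthogonal complement
  of ker \<gamma>'.
\<close>

lemma closure_Compl_Union_subspaces:
  fixes \<T> :: "'a::euclidean_space set set"
  assumes "finite \<T>" and "\<And>T. T \<in> \<T> \<Longrightarrow> subspace T \<and> dim T < DIM('a)"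
  shows "closure (- \<Union>\<T>) = UNIV"
  using assms
proof (induction rule: finite_induct)
  case empty
  then show ?case by simp
next
  case (insert T \<T>)
  have "closure (- T) = UNIV"
    using dense_complement_subspace[of T UNIV] insert.prems by (simp add: Compl_eq_Diff_UNIV)
  moreover have "open (- T)"
    using insert.prems closed_subspace by blast
  then have "- T \<subseteq> closure (- \<Union>(insert T \<T>))"
    using open_Int_closure_subset[of "- T" "- \<Union>\<T>"] insert.IH insert.prems by auto
  ultimately show ?case
    by (metis closure_closure closure_mono top.extremum_unique)
qed

lemma generic_combI:
  fixes L :: "(real \<times> real) set"
  assumes "finite L" and "\<And>a b. (a, b) \<notin> (\<Union>v\<in>L. span {v}) \<Longrightarrow> P a b"
  shows "generic_comb P"
proof -
  let ?U = "- (\<Union>v\<in>L. span {v})"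
  have "open ?U"
    using \<open>finite L\<close> by (intro open_Compl closed_UN) auto
  moreover have "closure ?U = UNIV"
  proof (rule closure_Compl_Union_subspaces)
    show "finite ((\<lambda>v. span {v}) ` L)" using \<open>finite L\<close> by simp
    have "dim (span {v}) < DIM(real \<times> real)" for v :: "real \<times> real"
      using dim_le_card[of "span {v}" "{v}"] by simp
    then show "subspace T \<and> dim T < DIM(real \<times> real)" if "T \<in> (\<lambda>v. span {v}) ` L" for T
      using that by auto
  qed
  ultimately show ?thesis
    unfolding generic_comb_def using assms(2) by (intro exI[of _ ?U]) auto
qed

lemma generic_comb_mono:
  assumes "generic_comb P" and "\<And>a b. P a b \<Longrightarrow> Q a b"
  shows "generic_comb Q"
  using assms unfolding generic_comb_def by blast

definition pencil_eigenvalues :: "('a::real_vector \<Rightarrow> 'b::real_vector) \<Rightarrow> ('a \<Rightarrow> 'b) \<Rightarrow> real set"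
  where "pencil_eigenvalues \<alpha> \<beta> = {\<mu>. \<exists>x. \<beta> x = \<mu> *\<^sub>R \<alpha> x \<and> x \<notin> ker \<alpha> \<inter> ker \<beta>}"

lemma pencil_eigenvectors_independent_modulo_common_kernel:
  fixes \<alpha> :: "'a::real_vector \<Rightarrow> 'b::real_vector" and \<beta>
  assumes "linear \<alpha>" "linear \<beta>" and transversal: "\<beta> ` ker \<alpha> \<inter> range \<alpha> = {0}"
    and "finite T"
    and eigen: "\<And>t. t \<in> T \<Longrightarrow> \<beta> (x t) = t *\<^sub>R \<alpha> (x t)"
    and not_common: "\<And>t. t \<in> T \<Longrightarrow> x t \<notin> ker \<alpha> \<inter> ker \<beta>"
    and "(\<Sum>t\<in>T. c t *\<^sub>R x t) \<in> ker \<alpha> \<inter> ker \<beta>" and "t \<in> T"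
  shows "c t = 0"
  using \<open>finite T\<close> eigen not_common \<open>(\<Sum>t\<in>T. c t *\<^sub>R x t) \<in> ker \<alpha> \<inter> ker \<beta>\<close> \<open>t \<in> T\<close>
proof (induction T arbitrary: c t rule: finite_induct)
  case empty
  then show ?case by simp
next
  case (insert t\<^sub>1 T)
  interpret \<alpha>: linear \<alpha> by fact
  interpret \<beta>: linear \<beta> by fact
  define s where "s = (\<Sum>t\<in>insert t\<^sub>1 T. c t *\<^sub>R x t)"
  define z where "z = (\<Sum>t\<in>T. (c t * (t - t\<^sub>1)) *\<^sub>R x t)"
  \<comment> \<open>\<alpha> z = \<beta> s - t1 \<alpha> s = 0 and \<beta> z \<in> im \<alpha>, so transversality puts the shorter
    combination z into the common kernel\<close>
  have s: "\<alpha> s = 0" "\<beta> s = 0"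
    using insert.prems(3) by (simp_all add: s_def ker_def)
  have \<beta>_sum: "\<beta> (\<Sum>t\<in>S. d t *\<^sub>R x t) = \<alpha> (\<Sum>t\<in>S. (d t * t) *\<^sub>R x t)"
    if "S \<subseteq> insert t\<^sub>1 T" for S d
    using that insert.prems(1) by (auto simp: \<alpha>.sum \<beta>.sum \<alpha>.scale \<beta>.scale intro!: sum.cong)
  have "z = (\<Sum>t\<in>insert t\<^sub>1 T. (c t * t - t\<^sub>1 * c t) *\<^sub>R x t)"
    using insert.hyps by (simp add: z_def algebra_simps)
  then have "\<alpha> z = \<beta> s - t\<^sub>1 *\<^sub>R \<alpha> s"
    by (simp add: s_def \<beta>_sum \<alpha>.diff \<alpha>.sum \<alpha>.scale scaleR_diff_left sum_subtractf scaleR_sum_right)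
  then have "z \<in> ker \<alpha>"
    using s by (simp add: ker_def)
  moreover have "\<beta> z \<in> range \<alpha>"
    using \<beta>_sum[of T "\<lambda>t. c t * (t - t\<^sub>1)"] by (auto simp: z_def)
  ultimately have "z \<in> ker \<alpha> \<inter> ker \<beta>"
    using transversal by (auto simp: ker_def)
  then have "c t * (t - t\<^sub>1) = 0" if "t \<in> T" for t
    using insert.IH[of "\<lambda>t. c t * (t - t\<^sub>1)"] insert.prems(1,2) that by (auto simp: z_def)
  then have c_T: "c t = 0" if "t \<in> T" for t
    using that insert.hyps(2) by fastforce
  then have "s = c t\<^sub>1 *\<^sub>R x t\<^sub>1"
    using insert.hyps by (simp add: s_def)
  then have "c t\<^sub>1 = 0"
    using s insert.prems(2)[of t\<^sub>1] by (auto simp: ker_def \<alpha>.scale \<beta>.scale)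
  with c_T insert.prems(4) show ?case by auto
qed

lemma finite_pencil_eigenvalues:
  fixes \<alpha> :: "'a::euclidean_space \<Rightarrow> 'b::real_vector" and \<beta>
  assumes "linear \<alpha>" "linear \<beta>" and transversal: "\<beta> ` ker \<alpha> \<inter> range \<alpha> = {0}"
  shows "finite (pencil_eigenvalues \<alpha> \<beta>)"
proof (rule ccontr)
  assume "infinite (pencil_eigenvalues \<alpha> \<beta>)"
  then obtain T where T: "finite T" "card T = Suc DIM('a)" "T \<subseteq> pencil_eigenvalues \<alpha> \<beta>"
    using infinite_arbitrarily_large by blast
  then have "\<forall>t\<in>T. \<exists>x. \<beta> x = t *\<^sub>R \<alpha> x \<and> x \<notin> ker \<alpha> \<inter> ker \<beta>"
    unfolding pencil_eigenvalues_def by blast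
  then obtain x where eigen: "\<And>t. t \<in> T \<Longrightarrow> \<beta> (x t) = t *\<^sub>R \<alpha> (x t)"
    and not_common: "\<And>t. t \<in> T \<Longrightarrow> x t \<notin> ker \<alpha> \<inter> ker \<beta>"
    by metis
  have "inj_on x T"
  proof (rule inj_onI)
    fix s t assume st: "s \<in> T" "t \<in> T" "x s = x t"
    then have "(s - t) *\<^sub>R \<alpha> (x t) = 0"
      using eigen by (metis scaleR_left_diff_distrib diff_self)
    then show "s = t"
      using eigen[OF st(2)] not_common[OF st(2)] by (auto simp: ker_def)
  qed
  have "independent (x ` T)"
  proof (rule independent_if_scalars_zero)
    show "finite (x ` T)" using T(1) by simp
    fix c v assume "(\<Sum>v\<in>x ` T. c v *\<^sub>R v) = 0" "v \<in> x ` T"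
    then show "c v = 0"
      using pencil_eigenvectors_independent_modulo_common_kernel[OF assms T(1) eigen not_common,
          of "c \<circ> x"]
      by (auto simp: sum.reindex[OF \<open>inj_on x T\<close>] ker_def linear_0[OF assms(1)] linear_0[OF assms(2)])
  qed
  then have "card (x ` T) \<le> DIM('a)"
    by (rule independent_bound[THEN conjunct2])
  with T(2) card_image[OF \<open>inj_on x T\<close>] show False by simp
qed

theorem generic_comb_ker_eq:
  fixes \<alpha> :: "'a::euclidean_space \<Rightarrow> 'b::real_vector" and \<beta>
  assumes "linear \<alpha>" "linear \<beta>" and transversal: "\<beta> ` ker \<alpha> \<inter> range \<alpha> = {0}"
  shows "generic_comb (\<lambda>a b. ker (\<lambda>x. a *\<^sub>R \<alpha> x + b *\<^sub>R \<beta> x) = ker \<alpha> \<inter> ker \<beta>)"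
proof (rule generic_combI)
  let ?E = "pencil_eigenvalues \<alpha> \<beta>"
  show "finite (insert (1, 0) ((\<lambda>\<mu>. (- \<mu>, 1)) ` ?E))"
    using finite_pencil_eigenvalues[OF assms] by simp
  fix a b :: real
  assume off_lines: "(a, b) \<notin> (\<Union>v\<in>insert (1, 0) ((\<lambda>\<mu>. (- \<mu>, 1)) ` ?E). span {v})"
  have "b \<noteq> 0"
  proof
    assume "b = 0"
    then have "(a, b) = a *\<^sub>R (1, 0)"
      by simp
    then have "(a, b) \<in> span {(1, 0)}"
      by (metis span_mul span_base singletonI)
    with off_lines show False by blast
  qed
  have "- a / b \<notin> ?E"
  proof
    assume "- a / b \<in> ?E"
    moreover have "(a, b) = b *\<^sub>R (- (- a / b), 1)"
      using \<open>b \<noteq> 0\<close> by simp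
    then have "(a, b) \<in> span {(- (- a / b), 1)}"
      by (metis span_mul span_base singletonI)
    ultimately show False using off_lines by blast
  qed
  show "ker (\<lambda>x. a *\<^sub>R \<alpha> x + b *\<^sub>R \<beta> x) = ker \<alpha> \<inter> ker \<beta>"
  proof
    show "ker \<alpha> \<inter> ker \<beta> \<subseteq> ker (\<lambda>x. a *\<^sub>R \<alpha> x + b *\<^sub>R \<beta> x)"
      by (auto simp: ker_def)
    show "ker (\<lambda>x. a *\<^sub>R \<alpha> x + b *\<^sub>R \<beta> x) \<subseteq> ker \<alpha> \<inter> ker \<beta>"
    proof
      fix x assume "x \<in> ker (\<lambda>x. a *\<^sub>R \<alpha> x + b *\<^sub>R \<beta> x)"
      then have "b *\<^sub>R (\<beta> x - (- a / b) *\<^sub>R \<alpha> x) = 0"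
        using \<open>b \<noteq> 0\<close> by (simp add: ker_def algebra_simps)
      then have "\<beta> x = (- a / b) *\<^sub>R \<alpha> x"
        using \<open>b \<noteq> 0\<close> by (simp add: eq_neg_iff_add_eq_0)
      with \<open>- a / b \<notin> ?E\<close> show "x \<in> ker \<alpha> \<inter> ker \<beta>"
        unfolding pencil_eigenvalues_def by blast
    qed
  qed
qed

lemma adjoint_scaleR_add:
  fixes f g :: "'a::euclidean_space \<Rightarrow> 'b::euclidean_space"
  assumes "linear f" "linear g"
  shows "adjoint (\<lambda>x. a *\<^sub>R f x + b *\<^sub>R g x) = (\<lambda>y. a *\<^sub>R adjoint f y + b *\<^sub>R adjoint g y)"
  by (rule adjoint_unique)
    (simp add: inner_add_left inner_add_right adjoint_clauses[OF assms(1)] adjoint_clauses[OF assms(2)])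

lemma orthogonal_comp_range:
  fixes f :: "'a::euclidean_space \<Rightarrow> 'b::euclidean_space"
  assumes "linear f"
  shows "(range f)\<^sup>\<bottom> = ker (adjoint f)"
  using ker_orthogonal_comp_adjoint[OF adjoint_linear[OF assms]]
  by (simp add: adjoint_adjoint[OF assms] ker_def vimage_def)

lemma orthogonal_comp_vimage:
  fixes f :: "'a::euclidean_space \<Rightarrow> 'b::euclidean_space"
  assumes "linear f" and "subspace W"
  shows "(f -` W)\<^sup>\<bottom> = adjoint f ` (W\<^sup>\<bottom>)"
proof -
  have "(adjoint f ` (W\<^sup>\<bottom>))\<^sup>\<bottom> = f -` (W\<^sup>\<bottom>\<^sup>\<bottom>)"
    by (auto simp: orthogonal_comp_def orthogonal_def adjoint_clauses[OF assms(1)])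
  then have "(adjoint f ` (W\<^sup>\<bottom>))\<^sup>\<bottom>\<^sup>\<bottom> = (f -` W)\<^sup>\<bottom>"
    by (simp add: orthogonal_comp_self[OF assms(2)])
  moreover have "subspace (adjoint f ` (W\<^sup>\<bottom>))"
    by (intro linear_subspace_image adjoint_linear assms(1) subspace_orthogonal_comp)
  ultimately show ?thesis
    by (simp add: orthogonal_comp_self)
qed

lemma orthogonal_comp_ker:
  fixes f :: "'a::euclidean_space \<Rightarrow> 'b::euclidean_space"
  assumes "linear f"
  shows "(ker f)\<^sup>\<bottom> = range (adjoint f)"
  using orthogonal_comp_vimage[OF assms, of "{0}"] by (simp add: ker_def vimage_def)

lemma orthogonal_comp_sums:
  fixes S T :: "'a::real_inner set"
  assumes "0 \<in> S" "0 \<in> T"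
  shows "{u + v |u v. u \<in> S \<and> v \<in> T}\<^sup>\<bottom> = S\<^sup>\<bottom> \<inter> T\<^sup>\<bottom>"
proof (intro set_eqI iffI)
  fix x assume x: "x \<in> {u + v |u v. u \<in> S \<and> v \<in> T}\<^sup>\<bottom>"
  have "u + 0 \<in> {u + v |u v. u \<in> S \<and> v \<in> T}" "0 + v \<in> {u + v |u v. u \<in> S \<and> v \<in> T}"
    if "u \<in> S" "v \<in> T" for u v
    using that assms by blast+
  then show "x \<in> S\<^sup>\<bottom> \<inter> T\<^sup>\<bottom>"
    using x assms unfolding orthogonal_comp_def orthogonal_def by auto
qed (auto simp: orthogonal_comp_def orthogonal_def inner_add_left)

lemma subspace_eq_UNIV_iff_orthogonal_comp:
  fixes S :: "'a::euclidean_space set"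
  assumes "subspace S"
  shows "S = UNIV \<longleftrightarrow> S\<^sup>\<bottom> = {0}"
  by (metis assms orthogonal_comp_UNIV orthogonal_comp_null orthogonal_comp_self)

lemma sums_vimage_range_ker_eq_UNIV_iff:
  fixes \<alpha> \<beta> :: "'a::euclidean_space \<Rightarrow> 'b::euclidean_space"
  assumes "linear \<alpha>" "linear \<beta>"
  shows "{u + v |u v. u \<in> \<beta> -` range \<alpha> \<and> v \<in> ker \<alpha>} = UNIV \<longleftrightarrow>
    adjoint \<beta> ` ker (adjoint \<alpha>) \<inter> range (adjoint \<alpha>) = {0}"
proof -
  have "subspace (range \<alpha>)"
    by (rule linear_subspace_image[OF assms(1) subspace_UNIV])
  then have subspaces: "subspace (\<beta> -` range \<alpha>)" "subspace (ker \<alpha>)"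
    using linear_subspace_vimage[OF assms(2)] linear_subspace_kernel[OF assms(1)]
    by (simp_all add: ker_def)
  then have "{u + v |u v. u \<in> \<beta> -` range \<alpha> \<and> v \<in> ker \<alpha>}\<^sup>\<bottom> =
      (\<beta> -` range \<alpha>)\<^sup>\<bottom> \<inter> (ker \<alpha>)\<^sup>\<bottom>"
    by (intro orthogonal_comp_sums subspace_0)
  also have "\<dots> = adjoint \<beta> ` ker (adjoint \<alpha>) \<inter> range (adjoint \<alpha>)"
    using \<open>subspace (range \<alpha>)\<close>
    by (simp add: orthogonal_comp_vimage orthogonal_comp_range orthogonal_comp_ker assms)
  finally show ?thesis
    using subspace_eq_UNIV_iff_orthogonal_comp[OF subspace_sums[OF subspaces]] by simp
qed

definition riesz :: "'a::real_inner \<Rightarrow> 'a \<Rightarrow> real"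
  where "riesz p = (\<lambda>x. p \<bullet> x)"

lemma riesz_0: "riesz 0 = (\<lambda>_. 0)"
  by (simp add: riesz_def)

lemma inj_riesz: "inj riesz"
proof (rule injI)
  fix p q :: 'a assume "riesz p = riesz q"
  then have "p \<bullet> (p - q) = q \<bullet> (p - q)"
    by (simp add: riesz_def fun_eq_iff)
  then have "(p - q) \<bullet> (p - q) = 0"
    by (simp add: inner_diff_left)
  then show "p = q" by simp
qed

lemma dual_space_eq_range_riesz: "(dual_space :: ('a::euclidean_space \<Rightarrow> real) set) = range riesz"
proof (intro set_eqI iffI)
  fix \<phi> :: "'a \<Rightarrow> real"
  assume "\<phi> \<in> dual_space"
  then have "\<phi> = riesz (adjoint \<phi> 1)"
    using adjoint_clauses(2)[of \<phi> 1] by (auto simp: dual_space_def riesz_def fun_eq_iff)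
  then show "\<phi> \<in> range riesz" by blast
next
  fix \<phi> :: "'a \<Rightarrow> real"
  assume "\<phi> \<in> range riesz"
  then show "\<phi> \<in> dual_space"
    by (auto simp: dual_space_def riesz_def intro: bounded_linear.linear bounded_linear_inner_right)
qed

lemma dual_map_riesz:
  fixes f :: "'a::euclidean_space \<Rightarrow> 'b::euclidean_space"
  assumes "linear f"
  shows "dual_map f (riesz p) = riesz (adjoint f p)"
  by (simp add: dual_map_def riesz_def o_def adjoint_clauses[OF assms])

lemma dual_ker_eq_riesz_image:
  fixes f :: "'a::euclidean_space \<Rightarrow> 'b::euclidean_space"
  assumes "linear f"
  shows "dual_ker f = riesz ` ker (adjoint f)"
  unfolding dual_ker_def dual_space_eq_range_riesz
  by (auto simp: dual_map_riesz[OF assms] ker_def riesz_0[symmetric] inj_eq[OF inj_riesz])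

lemma dual_im_eq_riesz_image:
  fixes f :: "'a::euclidean_space \<Rightarrow> 'b::euclidean_space"
  assumes "linear f"
  shows "dual_im f = riesz ` range (adjoint f)"
  unfolding dual_im_def dual_space_eq_range_riesz
  by (simp add: image_image dual_map_riesz[OF assms])

lemma dual_transversal_iff_adjoint_transversal:
  fixes \<alpha> \<beta> :: "'a::euclidean_space \<Rightarrow> 'b::euclidean_space"
  assumes "linear \<alpha>" "linear \<beta>"
  shows "dual_map \<beta> ` dual_ker \<alpha> \<inter> dual_im \<alpha> = {\<lambda>_. 0} \<longleftrightarrow>
    adjoint \<beta> ` ker (adjoint \<alpha>) \<inter> range (adjoint \<alpha>) = {0}"
proof -
  have "dual_map \<beta> ` dual_ker \<alpha> \<inter> dual_im \<alpha> =
      riesz ` (adjoint \<beta> ` ker (adjoint \<alpha>) \<inter> range (adjoint \<alpha>))"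
    by (simp add: dual_ker_eq_riesz_image dual_im_eq_riesz_image assms image_image
        dual_map_riesz image_Int[OF inj_riesz])
  moreover have "riesz ` S = {\<lambda>_. 0} \<longleftrightarrow> S = {0}" for S :: "'a set"
    using inj_image_eq_iff[OF inj_riesz, of S "{0}"] by (simp add: riesz_0)
  ultimately show ?thesis
    by simp
qed

theorem generic_comb_range_eq:
  fixes \<alpha> \<beta> :: "'a::euclidean_space \<Rightarrow> 'b::euclidean_space"
  assumes "linear \<alpha>" "linear \<beta>"
    and adjoint_transversal: "adjoint \<beta> ` ker (adjoint \<alpha>) \<inter> range (adjoint \<alpha>) = {0}"
  shows "generic_comb (\<lambda>a b. range (\<lambda>x. a *\<^sub>R \<alpha> x + b *\<^sub>R \<beta> x) =
    {u + v |u v. u \<in> range \<alpha> \<and> v \<in> range \<beta>})"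
proof (rule generic_comb_mono[OF generic_comb_ker_eq[OF adjoint_linear[OF assms(1)]
        adjoint_linear[OF assms(2)] adjoint_transversal]])
  fix a b
  assume ker_eq: "ker (\<lambda>y. a *\<^sub>R adjoint \<alpha> y + b *\<^sub>R adjoint \<beta> y) =
    ker (adjoint \<alpha>) \<inter> ker (adjoint \<beta>)"
  let ?\<gamma> = "\<lambda>x. a *\<^sub>R \<alpha> x + b *\<^sub>R \<beta> x"
  let ?R = "{u + v |u v. u \<in> range \<alpha> \<and> v \<in> range \<beta>}"
  have "linear ?\<gamma>"
    using assms by (intro linear_compose_add linear_compose_scale_right)
  have "(range ?\<gamma>)\<^sup>\<bottom> = ker (adjoint ?\<gamma>)"
    by (rule orthogonal_comp_range[OF \<open>linear ?\<gamma>\<close>])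
  also have "\<dots> = ker (adjoint \<alpha>) \<inter> ker (adjoint \<beta>)"
    using ker_eq by (simp add: adjoint_scaleR_add assms)
  also have "\<dots> = (range \<alpha>)\<^sup>\<bottom> \<inter> (range \<beta>)\<^sup>\<bottom>"
    by (simp add: orthogonal_comp_range assms)
  also have "\<dots> = ?R\<^sup>\<bottom>"
    using linear_0[OF assms(1)] linear_0[OF assms(2)] by (intro orthogonal_comp_sums[symmetric]) auto
  finally have "(range ?\<gamma>)\<^sup>\<bottom>\<^sup>\<bottom> = ?R\<^sup>\<bottom>\<^sup>\<bottom>"
    by simp
  moreover have "subspace (range ?\<gamma>)"
    using \<open>linear ?\<gamma>\<close> by (intro linear_subspace_image subspace_UNIV)
  moreover have "subspace ?R"
    using assms by (intro subspace_sums linear_subspace_image subspace_UNIV)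
  ultimately show "range ?\<gamma> = ?R"
    by (simp add: orthogonal_comp_self)
qed

theorem lemma6p1:
  fixes \<alpha> \<beta> :: "'a::euclidean_space \<Rightarrow> 'b::euclidean_space"
  assumes "linear \<alpha>" and "linear \<beta>"
  shows "(\<beta> ` ker \<alpha> \<inter> range \<alpha> = {0} \<longrightarrow>
            generic_comb (\<lambda>a b. ker (\<lambda>x. a *\<^sub>R \<alpha> x + b *\<^sub>R \<beta> x) = ker \<alpha> \<inter> ker \<beta>))
       \<and> ((dual_map \<beta> ` dual_ker \<alpha> \<inter> dual_im \<alpha> = {\<lambda>_. 0}) \<longleftrightarrow>
            {u + v | u v. u \<in> \<beta> -` range \<alpha> \<and> v \<in> ker \<alpha>} = UNIV)
       \<and> ((dual_map \<beta> ` dual_ker \<alpha> \<inter> dual_im \<alpha> = {\<lambda>_. 0} \<or>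
            {u + v | u v. u \<in> \<beta> -` range \<alpha> \<and> v \<in> ker \<alpha>} = UNIV) \<longrightarrow>
            generic_comb (\<lambda>a b. range (\<lambda>x. a *\<^sub>R \<alpha> x + b *\<^sub>R \<beta> x) =
                                {u + v | u v. u \<in> range \<alpha> \<and> v \<in> range \<beta>}))"
  unfolding dual_transversal_iff_adjoint_transversal[OF assms]
    sums_vimage_range_ker_eq_UNIV_iff[OF assms]
  using generic_comb_ker_eq[OF assms] generic_comb_range_eq[OF assms] by simp

end
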